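(* Let $n\ge 2$, let $\mathcal{S}\subseteq(\mathbb{C}^d)^{\otimes n}$ be the permutation-symmetric subspace, let $|\psi\rangle\in\mathcal{S}$, and let $B$ be an invertible $d\times d$ complex matrix. Then $B_{(1)}B_{(2)}^{-1}|\psi\rangle=|\psi\rangle$ if and only if $B_{(1)}|\psi\rangle\in\mathcal{S}$.
   Context: $\mathcal{S}$ is the set of vectors in $(\mathbb{C}^d)^{\otimes n}$ invariant under all permutations of the $n$ tensor factors. For a $d\times d$ matrix $X$ and $1\le k\le n$, $X_{(k)}$ denotes $\mathbb{I}\otimes\cdots\otimes\mathbb{I}\otimes X\otimes\mathbb{I}\otimes\cdots\otimes\mathbb{I}$ with $X$ in the $k$-th position of the $n$-fold tensor product. *)

theory Defs
  imports "HOL-Analysis.Analysis" "HOL-Combinatorics.Permutations"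
begin

text \<open>A vector in the n-fold tensor power of C^d (with d = CARD('d)) is represented by its
coordinates with respect to the product basis: a function from index tuples
(lists over 'd of length n) to complex numbers. Values at lists of other lengths are irrelevant.\<close>

type_synonym 'd tvec = "'d list \<Rightarrow> complex"

definition tvec_eq :: "nat \<Rightarrow> 'd tvec \<Rightarrow> 'd tvec \<Rightarrow> bool" where
  "tvec_eq n \<phi> \<psi> \<longleftrightarrow> (\<forall>i. length i = n \<longrightarrow> \<phi> i = \<psi> i)"

definition sym_space :: "nat \<Rightarrow> 'd tvec \<Rightarrow> bool" where
  "sym_space n \<psi> \<longleftrightarrow>
     (\<forall>\<sigma> i. \<sigma> permutes {..<n} \<longrightarrow> length i = n \<longrightarrow> \<psi> (permute_list \<sigma> i) = \<psi> i)"

text \<open>X_(k): X acting on tensor factor k (0-based), identity elsewhere.\<close>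
definition op_at :: "nat \<Rightarrow> complex^'d^'d \<Rightarrow> 'd::finite tvec \<Rightarrow> 'd tvec" where
  "op_at k X \<psi> = (\<lambda>i. \<Sum>j\<in>UNIV. X $ (i ! k) $ j * \<psi> (i[k := j]))"

end

theory Submission
  imports Defs
begin

text \<open>Since B_(2) commutes with B_(1) and is invertible, the equation B_(1) B_(2)^-1 \<psi> = \<psi>
  is equivalent to B_(1) \<psi> = B_(2) \<psi>. For symmetric \<psi>, permuting the tensor factors of
  B_(k) \<psi> by \<sigma> yields B_(\<sigma> k) \<psi>; hence B_(1) \<psi> is symmetric iff all B_(k) \<psi> coincide,
  and conjugating by transpositions reduces this to B_(1) \<psi> = B_(2) \<psi>.\<close>

lemma matrix_inv_right:
  fixes A :: "'a::semiring_1^'n^'m"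
  assumes "invertible A"
  shows "A ** matrix_inv A = mat 1"
  using assms unfolding invertible_def matrix_inv_def by (rule someI_ex[THEN conjunct1])

lemma matrix_inv_left:
  fixes A :: "'a::semiring_1^'n^'m"
  assumes "invertible A"
  shows "matrix_inv A ** A = mat 1"
  using assms unfolding invertible_def matrix_inv_def by (rule someI_ex[THEN conjunct2])

lemma tvec_eq_refl [simp]: "tvec_eq n \<phi> \<phi>"
  unfolding tvec_eq_def by simp

lemma tvec_eq_sym: "tvec_eq n \<phi> \<psi> \<Longrightarrow> tvec_eq n \<psi> \<phi>"
  unfolding tvec_eq_def by simp

lemma tvec_eq_trans [trans]: "tvec_eq n \<phi> \<xi> \<Longrightarrow> tvec_eq n \<xi> \<psi> \<Longrightarrow> tvec_eq n \<phi> \<psi>"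
  unfolding tvec_eq_def by simp

lemma op_at_cong: "tvec_eq n \<phi> \<psi> \<Longrightarrow> tvec_eq n (op_at k X \<phi>) (op_at k X \<psi>)"
  unfolding tvec_eq_def op_at_def by simp

lemma op_at_commute:
  assumes "k \<noteq> l"
  shows "op_at k X (op_at l Y \<psi>) = op_at l Y (op_at k X \<psi>)"
proof
  fix i
  have "op_at k X (op_at l Y \<psi>) i =
      (\<Sum>j\<in>UNIV. \<Sum>m\<in>UNIV. X $ (i!k) $ j * (Y $ (i!l) $ m * \<psi> (i[k:=j, l:=m])))"
    using assms by (simp add: op_at_def sum_distrib_left)
  also have "\<dots> = (\<Sum>m\<in>UNIV. \<Sum>j\<in>UNIV. X $ (i!k) $ j * (Y $ (i!l) $ m * \<psi> (i[k:=j, l:=m])))"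
    by (rule sum.swap)
  also have "\<dots> = op_at l Y (op_at k X \<psi>) i"
    using assms by (simp add: op_at_def sum_distrib_left list_update_swap mult.left_commute)
  finally show "op_at k X (op_at l Y \<psi>) i = op_at l Y (op_at k X \<psi>) i" .
qed

lemma op_at_op_at:
  assumes "k < n"
  shows "tvec_eq n (op_at k X (op_at k Y \<psi>)) (op_at k (X ** Y) \<psi>)"
  unfolding tvec_eq_def
proof (intro allI impI)
  fix i :: "'a list" assume "length i = n"
  with assms have "op_at k X (op_at k Y \<psi>) i =
      (\<Sum>j\<in>UNIV. \<Sum>m\<in>UNIV. X $ (i!k) $ j * (Y $ j $ m * \<psi> (i[k:=m])))"
    by (simp add: op_at_def sum_distrib_left)
  also have "\<dots> = (\<Sum>m\<in>UNIV. \<Sum>j\<in>UNIV. X $ (i!k) $ j * (Y $ j $ m * \<psi> (i[k:=m])))"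
    by (rule sum.swap)
  also have "\<dots> = op_at k (X ** Y) \<psi> i"
    by (simp add: op_at_def matrix_matrix_mult_def sum_distrib_right mult.assoc)
  finally show "op_at k X (op_at k Y \<psi>) i = op_at k (X ** Y) \<psi> i" .
qed

lemma op_at_mat_1:
  assumes "k < n"
  shows "tvec_eq n (op_at k (mat 1) \<psi>) \<psi>"
  unfolding tvec_eq_def
proof (intro allI impI)
  fix i :: "'a list" assume "length i = n"
  have "op_at k (mat 1) \<psi> i = (\<Sum>j\<in>UNIV. if j = i!k then \<psi> (i[k:=j]) else 0)"
    unfolding op_at_def by (rule sum.cong) (auto simp: mat_def)
  also have "\<dots> = \<psi> i"
    using assms \<open>length i = n\<close> by simp
  finally show "op_at k (mat 1) \<psi> i = \<psi> i" .
qed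

lemma op_at_matrix_inv_cancel:
  assumes "invertible A" "k < n"
  shows "tvec_eq n (op_at k A (op_at k (matrix_inv A) \<psi>)) \<psi>"
    and "tvec_eq n (op_at k (matrix_inv A) (op_at k A \<psi>)) \<psi>"
proof -
  show "tvec_eq n (op_at k A (op_at k (matrix_inv A) \<psi>)) \<psi>"
    using op_at_op_at[OF assms(2)] op_at_mat_1[OF assms(2)] matrix_inv_right[OF assms(1)]
    by (metis tvec_eq_trans)
  show "tvec_eq n (op_at k (matrix_inv A) (op_at k A \<psi>)) \<psi>"
    using op_at_op_at[OF assms(2)] op_at_mat_1[OF assms(2)] matrix_inv_left[OF assms(1)]
    by (metis tvec_eq_trans)
qed

lemma op_at_invertible_tvec_eq_iff:
  assumes "invertible A" "k < n"
  shows "tvec_eq n (op_at k A \<phi>) (op_at k A \<psi>) \<longleftrightarrow> tvec_eq n \<phi> \<psi>"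
proof
  assume "tvec_eq n (op_at k A \<phi>) (op_at k A \<psi>)"
  then have "tvec_eq n (op_at k (matrix_inv A) (op_at k A \<phi>)) (op_at k (matrix_inv A) (op_at k A \<psi>))"
    by (rule op_at_cong)
  then show "tvec_eq n \<phi> \<psi>"
    using op_at_matrix_inv_cancel(2)[OF assms] by (meson tvec_eq_sym tvec_eq_trans)
qed (rule op_at_cong)

lemma op_at_matrix_inv_fixed_iff:
  assumes "invertible B" "k < n" "l < n" "k \<noteq> l"
  shows "tvec_eq n (op_at k B (op_at l (matrix_inv B) \<psi>)) \<psi> \<longleftrightarrow>
    tvec_eq n (op_at k B \<psi>) (op_at l B \<psi>)"
proof -
  have "op_at l B (op_at k B (op_at l (matrix_inv B) \<psi>)) =
      op_at k B (op_at l B (op_at l (matrix_inv B) \<psi>))"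
    using assms(4) by (simp add: op_at_commute)
  moreover have "tvec_eq n (op_at k B (op_at l B (op_at l (matrix_inv B) \<psi>))) (op_at k B \<psi>)"
    by (rule op_at_cong[OF op_at_matrix_inv_cancel(1)[OF assms(1,3)]])
  ultimately have "tvec_eq n (op_at l B (op_at k B (op_at l (matrix_inv B) \<psi>))) (op_at k B \<psi>)"
    by simp
  then show ?thesis
    using op_at_invertible_tvec_eq_iff[OF assms(1,3), of "op_at k B (op_at l (matrix_inv B) \<psi>)" \<psi>]
    by (meson tvec_eq_sym tvec_eq_trans)
qed

lemma permute_list_list_update:
  assumes "\<sigma> permutes {..<length i}" "k < length i"
  shows "(permute_list \<sigma> i)[k := j] = permute_list \<sigma> (i[\<sigma> k := j])"
proof (rule nth_equalityI)
  fix m assume "m < length ((permute_list \<sigma> i)[k := j])"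
  then have "m < length i" by simp
  moreover have "\<sigma> m = \<sigma> k \<longleftrightarrow> m = k"
    using assms(1) by (metis permutes_inj injD)
  moreover have "\<sigma> k < length i"
    using assms permutes_in_image by fastforce
  ultimately show "(permute_list \<sigma> i)[k := j] ! m = permute_list \<sigma> (i[\<sigma> k := j]) ! m"
    using assms by (auto simp: permute_list_nth nth_list_update permutes_in_image)
qed simp

lemma op_at_permute_list:
  assumes "sym_space n \<psi>" "\<sigma> permutes {..<n}" "length i = n" "k < n"
  shows "op_at k X \<psi> (permute_list \<sigma> i) = op_at (\<sigma> k) X \<psi> i"
  unfolding op_at_def
proof (rule sum.cong[OF refl])
  fix j
  have "\<psi> ((permute_list \<sigma> i)[k := j]) = \<psi> (i[\<sigma> k := j])"
    using assms unfolding sym_space_def by (simp add: permute_list_list_update)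
  moreover have "permute_list \<sigma> i ! k = i ! \<sigma> k"
    using assms by (simp add: permute_list_nth)
  ultimately show "X $ (permute_list \<sigma> i ! k) $ j * \<psi> ((permute_list \<sigma> i)[k := j]) =
      X $ (i ! \<sigma> k) $ j * \<psi> (i[\<sigma> k := j])"
    by simp
qed

lemma sym_space_op_at_iff:
  assumes "sym_space n \<psi>" "k < n"
  shows "sym_space n (op_at k X \<psi>) \<longleftrightarrow> (\<forall>m<n. tvec_eq n (op_at m X \<psi>) (op_at k X \<psi>))"
proof
  assume sym: "sym_space n (op_at k X \<psi>)"
  show "\<forall>m<n. tvec_eq n (op_at m X \<psi>) (op_at k X \<psi>)"
  proof (intro allI impI)
    fix m assume "m < n"
    then have \<tau>: "Transposition.transpose k m permutes {..<n}"
      using assms(2) by (intro permutes_swap_id) auto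
    show "tvec_eq n (op_at m X \<psi>) (op_at k X \<psi>)"
      unfolding tvec_eq_def
    proof (intro allI impI)
      fix i :: "'a list" assume i: "length i = n"
      have "op_at m X \<psi> i = op_at k X \<psi> (permute_list (Transposition.transpose k m) i)"
        using op_at_permute_list[OF assms(1) \<tau> i assms(2)] by simp
      also have "\<dots> = op_at k X \<psi> i"
        using sym \<tau> i unfolding sym_space_def by simp
      finally show "op_at m X \<psi> i = op_at k X \<psi> i" .
    qed
  qed
next
  assume all: "\<forall>m<n. tvec_eq n (op_at m X \<psi>) (op_at k X \<psi>)"
  show "sym_space n (op_at k X \<psi>)"
    unfolding sym_space_def
  proof (intro allI impI)
    fix \<sigma> and i :: "'a list" assume \<sigma>: "\<sigma> permutes {..<n}" and "length i = n"
    moreover have "\<sigma> k < n"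
      using \<sigma> assms(2) permutes_in_image by fastforce
    ultimately show "op_at k X \<psi> (permute_list \<sigma> i) = op_at k X \<psi> i"
      using op_at_permute_list[OF assms(1) \<sigma> _ assms(2)] all unfolding tvec_eq_def by simp
  qed
qed

lemma sym_space_op_at_iff_pair:
  assumes "sym_space n \<psi>" "k < n" "l < n" "k \<noteq> l"
  shows "sym_space n (op_at k X \<psi>) \<longleftrightarrow> tvec_eq n (op_at k X \<psi>) (op_at l X \<psi>)"
proof -
  have "tvec_eq n (op_at m X \<psi>) (op_at k X \<psi>)"
    if kl: "tvec_eq n (op_at k X \<psi>) (op_at l X \<psi>)" and "m < n" "m \<noteq> k" for m
    unfolding tvec_eq_def
  proof (intro allI impI)
    fix i :: "'a list" assume i: "length i = n"
    define \<tau> where "\<tau> = Transposition.transpose l m"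
    have \<tau>: "\<tau> permutes {..<n}"
      unfolding \<tau>_def using assms(3) \<open>m < n\<close> by (intro permutes_swap_id) auto
    \<comment> \<open>\<open>\<tau>\<close> moves factor \<open>l\<close> to \<open>m\<close> and fixes \<open>k\<close>\<close>
    have "op_at m X \<psi> i = op_at l X \<psi> (permute_list \<tau> i)"
      using op_at_permute_list[OF assms(1) \<tau> i assms(3)] by (simp add: \<tau>_def)
    also have "\<dots> = op_at k X \<psi> (permute_list \<tau> i)"
      using kl i unfolding tvec_eq_def by simp
    also have "\<dots> = op_at k X \<psi> i"
      using op_at_permute_list[OF assms(1) \<tau> i assms(2)] assms(4) \<open>m \<noteq> k\<close> by (simp add: \<tau>_def)
    finally show "op_at m X \<psi> i = op_at k X \<psi> i" .
  qed
  then show ?thesis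
    using sym_space_op_at_iff[OF assms(1,2)] assms(3,4) by (metis tvec_eq_refl tvec_eq_sym)
qed

theorem lemma1:
  fixes n :: nat and \<psi> :: "'d::finite tvec" and B :: "complex^'d^'d"
  assumes "n \<ge> 2"
    and "sym_space n \<psi>"
    and "invertible B"
  shows "tvec_eq n (op_at 0 B (op_at 1 (matrix_inv B) \<psi>)) \<psi> \<longleftrightarrow> sym_space n (op_at 0 B \<psi>)"
proof -
  have "0 < n" "1 < n" using assms(1) by auto
  then show ?thesis
    using op_at_matrix_inv_fixed_iff[OF assms(3)] sym_space_op_at_iff_pair[OF assms(2)] by simp
qed

end
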